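(* Let $\Lambda$ be an Artin algebra, $\omega$ a $\Lambda$-module, and $M=M_1\oplus M_2$ a $\Lambda$-module. Then $\mathrm{l.app}_\omega M_1\ge\mathrm{l.app}_\omega M$.
   Context: All modules are finitely generated left modules. $\mathrm{add}\,\omega$ is the class of direct summands of finite direct sums of copies of $\omega$; a map $f:Z\to\omega_0$ with $\omega_0\in\mathrm{add}\,\omega$ is a left $\mathrm{add}\,\omega$-approximation if every map from $Z$ to a module in $\mathrm{add}\,\omega$ factors through $f$. For a module $Z$, $\mathrm{l.app}_\omega Z$ is the largest positive integer $m$ (or $\infty$) such that a complex $0\to Z\xrightarrow{f_1}\omega_1\xrightarrow{f_2}\omega_2\to\cdots$ with $\omega_i\in\mathrm{add}\,\omega$ and each $\mathrm{Im} f_i\hookrightarrow\omega_i$ a left $\mathrm{add}\,\omega$-approximation of $\mathrm{Im} f_i$ is exact up to $\omega_m$ (resp. everywhere). *)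

theory Defs
  imports "HOL-Algebra.Algebra" "HOL-Library.Extended_Nat"
begin

definition artinian_cring :: "'r ring \<Rightarrow> bool" where
  "artinian_cring R \<longleftrightarrow> cring R \<and>
     (\<forall>I :: nat \<Rightarrow> 'r set. (\<forall>n. ideal (I n) R \<and> I (Suc n) \<subseteq> I n)
        \<longrightarrow> (\<exists>N. \<forall>n\<ge>N. I n = I N))"

definition artin_algebra :: "'r ring \<Rightarrow> 'a ring \<Rightarrow> ('r \<Rightarrow> 'a) \<Rightarrow> bool" where
  "artin_algebra R L phi \<longleftrightarrow> artinian_cring R \<and> ring L \<and> phi \<in> ring_hom R L \<and>
     (\<forall>r\<in>carrier R. \<forall>x\<in>carrier L. phi r \<otimes>\<^bsub>L\<^esub> x = x \<otimes>\<^bsub>L\<^esub> phi r) \<and>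
     (\<exists>S. finite S \<and> S \<subseteq> carrier L \<and>
        (\<forall>x\<in>carrier L. \<exists>c \<in> S \<rightarrow> carrier R.
            x = finsum L (\<lambda>s. phi (c s) \<otimes>\<^bsub>L\<^esub> s) S))"

definition left_module :: "'a ring \<Rightarrow> ('a, 'm) module \<Rightarrow> bool" where
  "left_module L M \<longleftrightarrow> ring L \<and> abelian_group M \<and> module_axioms L M"

definition fin_gen :: "'a ring \<Rightarrow> ('a, 'm) module \<Rightarrow> bool" where
  "fin_gen L M \<longleftrightarrow> (\<exists>S. finite S \<and> S \<subseteq> carrier M \<and>
     (\<forall>x\<in>carrier M. \<exists>c \<in> S \<rightarrow> carrier L. x = finsum M (\<lambda>s. c s \<odot>\<^bsub>M\<^esub> s) S))"

definition left_submodule :: "'a ring \<Rightarrow> ('a, 'm) module \<Rightarrow> 'm set \<Rightarrow> bool" where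
  "left_submodule L M N \<longleftrightarrow> N \<subseteq> carrier M \<and> \<zero>\<^bsub>M\<^esub> \<in> N \<and>
     (\<forall>x\<in>N. \<forall>y\<in>N. x \<oplus>\<^bsub>M\<^esub> y \<in> N) \<and> (\<forall>x\<in>N. \<ominus>\<^bsub>M\<^esub> x \<in> N) \<and>
     (\<forall>r\<in>carrier L. \<forall>x\<in>N. r \<odot>\<^bsub>M\<^esub> x \<in> N)"

definition lhom :: "'a ring \<Rightarrow> ('a, 'm) module \<Rightarrow> ('a, 'n) module \<Rightarrow> ('m \<Rightarrow> 'n) \<Rightarrow> bool" where
  "lhom L M N f \<longleftrightarrow> f \<in> carrier M \<rightarrow> carrier N \<and>
     (\<forall>x\<in>carrier M. \<forall>y\<in>carrier M. f (x \<oplus>\<^bsub>M\<^esub> y) = f x \<oplus>\<^bsub>N\<^esub> f y) \<and>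
     (\<forall>r\<in>carrier L. \<forall>x\<in>carrier M. f (r \<odot>\<^bsub>M\<^esub> x) = r \<odot>\<^bsub>N\<^esub> f x)"

text \<open>Y is in add omega iff Y is a direct summand of omega^n for some n, i.e. there are
  maps s = (s_i) : Y -> omega^n and p = (p_i) : omega^n -> Y with p o s = id.\<close>
definition in_add :: "'a ring \<Rightarrow> ('a, 'w) module \<Rightarrow> ('a, 'u) module \<Rightarrow> bool" where
  "in_add L W Y \<longleftrightarrow> left_module L Y \<and>
     (\<exists>(n::nat) sc pr. (\<forall>i<n. lhom L Y W (sc i) \<and> lhom L W Y (pr i)) \<and>
        (\<forall>x\<in>carrier Y. x = finsum Y (\<lambda>i. pr i (sc i x)) {i. i < n}))"

text \<open>Modules in add omega are represented (up to isomorphism, which suffices) with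
  carrier in the universe type nat => w (submodules of omega^n embed there).\<close>
type_synonym ('a, 'w) umod = "('a, nat \<Rightarrow> 'w) module"

definition left_approx :: "'a ring \<Rightarrow> ('a, 'w) module \<Rightarrow> ('a, 'm) module
    \<Rightarrow> ('a, 'w) umod \<Rightarrow> ('m \<Rightarrow> (nat \<Rightarrow> 'w)) \<Rightarrow> bool" where
  "left_approx L W Z W0 f \<longleftrightarrow> in_add L W W0 \<and> lhom L Z W0 f \<and>
     (\<forall>Y :: ('a, 'w) umod. \<forall>g. in_add L W Y \<and> lhom L Z Y g \<longrightarrow>
        (\<exists>h. lhom L W0 Y h \<and> (\<forall>z\<in>carrier Z. g z = h (f z))))"

text \<open>Complex  0 -> Z --f1--> W 1 --g 1--> W 2 --g 2--> W 3 -> ...,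
  all W i in add omega, with each image inclusion Im -> W i a left approximation.\<close>
definition app_complex :: "'a ring \<Rightarrow> ('a, 'w) module \<Rightarrow> ('a, 'm) module
    \<Rightarrow> ('m \<Rightarrow> (nat \<Rightarrow> 'w)) \<Rightarrow> (nat \<Rightarrow> ('a, 'w) umod) \<Rightarrow> (nat \<Rightarrow> (nat \<Rightarrow> 'w) \<Rightarrow> (nat \<Rightarrow> 'w)) \<Rightarrow> bool" where
  "app_complex L W Z f1 Ws g \<longleftrightarrow>
     lhom L Z (Ws 1) f1 \<and> (\<forall>i\<ge>1. in_add L W (Ws i)) \<and>
     (\<forall>i\<ge>1. lhom L (Ws i) (Ws (Suc i)) (g i)) \<and>
     (\<forall>z\<in>carrier Z. g 1 (f1 z) = \<zero>\<^bsub>Ws 2\<^esub>) \<and>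
     (\<forall>i\<ge>1. \<forall>x\<in>carrier (Ws i). g (Suc i) (g i x) = \<zero>\<^bsub>Ws (Suc (Suc i))\<^esub>) \<and>
     left_approx L W ((Ws 1)\<lparr>carrier := f1 ` carrier Z\<rparr>) (Ws 1) id \<and>
     (\<forall>i\<ge>1. left_approx L W ((Ws (Suc i))\<lparr>carrier := g i ` carrier (Ws i)\<rparr>) (Ws (Suc i)) id)"

definition in_image :: "('a, 'm) module \<Rightarrow> ('m \<Rightarrow> (nat \<Rightarrow> 'w)) \<Rightarrow> (nat \<Rightarrow> ('a, 'w) umod)
    \<Rightarrow> (nat \<Rightarrow> (nat \<Rightarrow> 'w) \<Rightarrow> (nat \<Rightarrow> 'w)) \<Rightarrow> nat \<Rightarrow> (nat \<Rightarrow> 'w) set" where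
  "in_image Z f1 Ws g i = (if i = 1 then f1 ` carrier Z else g (i - 1) ` carrier (Ws (i - 1)))"

definition exact_at :: "('a, 'm) module \<Rightarrow> ('m \<Rightarrow> (nat \<Rightarrow> 'w)) \<Rightarrow> (nat \<Rightarrow> ('a, 'w) umod)
    \<Rightarrow> (nat \<Rightarrow> (nat \<Rightarrow> 'w) \<Rightarrow> (nat \<Rightarrow> 'w)) \<Rightarrow> nat \<Rightarrow> bool" where
  "exact_at Z f1 Ws g i \<longleftrightarrow>
     {x \<in> carrier (Ws i). g i x = \<zero>\<^bsub>Ws (Suc i)\<^esub>} = in_image Z f1 Ws g i"

text \<open>0 -> Z -> W 1 -> ... -> W m is exact: exact at Z and at W 1, ..., W (m-1).\<close>
definition exact_upto :: "('a, 'm) module \<Rightarrow> ('m \<Rightarrow> (nat \<Rightarrow> 'w)) \<Rightarrow> (nat \<Rightarrow> ('a, 'w) umod)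
    \<Rightarrow> (nat \<Rightarrow> (nat \<Rightarrow> 'w) \<Rightarrow> (nat \<Rightarrow> 'w)) \<Rightarrow> nat \<Rightarrow> bool" where
  "exact_upto Z f1 Ws g m \<longleftrightarrow> inj_on f1 (carrier Z) \<and>
     (\<forall>i. 1 \<le> i \<and> i < m \<longrightarrow> exact_at Z f1 Ws g i)"

definition exact_everywhere :: "('a, 'm) module \<Rightarrow> ('m \<Rightarrow> (nat \<Rightarrow> 'w)) \<Rightarrow> (nat \<Rightarrow> ('a, 'w) umod)
    \<Rightarrow> (nat \<Rightarrow> (nat \<Rightarrow> 'w) \<Rightarrow> (nat \<Rightarrow> 'w)) \<Rightarrow> bool" where
  "exact_everywhere Z f1 Ws g \<longleftrightarrow> inj_on f1 (carrier Z) \<and> (\<forall>i\<ge>1. exact_at Z f1 Ws g i)"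

text \<open>l.app: infinity if some such complex is exact everywhere, otherwise the largest
  positive m for which some such complex is exact up to W m (0 if there is none).\<close>
definition lapp :: "'a ring \<Rightarrow> ('a, 'w) module \<Rightarrow> ('a, 'm) module \<Rightarrow> enat" where
  "lapp L W Z = (if (\<exists>f1 Ws g. app_complex L W Z f1 Ws g \<and> exact_everywhere Z f1 Ws g) then \<infinity>
     else Sup (enat ` {m. m \<ge> 1 \<and> (\<exists>f1 Ws g. app_complex L W Z f1 Ws g \<and> exact_upto Z f1 Ws g m)}))"

end

theory Submission
  imports Defs
begin

text \<open>
  Let \<open>0 \<rightarrow> M \<rightarrow> W\<^sub>1 \<rightarrow> W\<^sub>2 \<rightarrow> \<dots>\<close> be a complex of left \<open>add \<omega>\<close>-approximations
  for \<open>M = M\<^sub>1 \<oplus> M\<^sub>2\<close>. A complex for \<open>M\<^sub>1\<close> is built term by term, with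
  \<open>D\<^sub>1 = W\<^sub>1\<close> and \<open>D\<^sub>i\<^sub>+\<^sub>1 = W\<^sub>i\<^sub>+\<^sub>1 \<oplus> D\<^sub>i\<close>. Along the way, the image \<open>S\<^sub>i\<close> of the map
  into \<open>D\<^sub>i\<close> is a retract of a submodule \<open>U\<^sub>i\<close> whose inclusion is a left approximation;
  initially \<open>U\<^sub>1\<close> is the image of \<open>M\<close>, retracted onto the image of \<open>M\<^sub>1\<close> by the projection.
  The next map is \<open>d = (h, e) : D\<^sub>i \<rightarrow> W\<^sub>i\<^sub>+\<^sub>1 \<oplus> D\<^sub>i\<close>, where \<open>h\<close> continues the old complex
  and \<open>e\<close> extends \<open>id - r\<close> from \<open>U\<^sub>i\<close> to \<open>D\<^sub>i\<close>. Wherever the old complex is exact,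
  \<open>ker h = U\<^sub>i\<close> and hence \<open>ker d = S\<^sub>i\<close>; and \<open>d(D\<^sub>i)\<close> is a retract of \<open>h(D\<^sub>i) \<times> D\<^sub>i\<close>,
  so its inclusion is again a left approximation. Hence every position at which the complex
  for \<open>M\<close> is exact is a position at which the new complex is exact, and
  \<open>l.app M\<^sub>1 \<ge> l.app M\<close>.
\<close>

section \<open>Left modules and their homomorphisms\<close>

lemma (in abelian_group) minus_add_cancel: "x \<in> carrier G \<Longrightarrow> y \<in> carrier G \<Longrightarrow> (x \<ominus> y) \<oplus> y = x"
  by (simp add: a_minus_def a_assoc l_neg)

lemma (in abelian_group) minus_minus_cancel: "x \<in> carrier G \<Longrightarrow> y \<in> carrier G \<Longrightarrow> x \<ominus> (x \<ominus> y) = y"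
  by (simp add: a_minus_def minus_add a_assoc[symmetric] r_neg minus_minus)

lemma (in abelian_group) minus_eq_zero_iff: "x \<in> carrier G \<Longrightarrow> y \<in> carrier G \<Longrightarrow> x \<ominus> y = \<zero> \<longleftrightarrow> x = y"
  by (metis minus_add_cancel a_minus_def r_neg l_zero minus_closed)

lemma (in abelian_group) add_eq_add_imp_minus_eq:
  assumes "a \<in> carrier G" "b \<in> carrier G" "c \<in> carrier G" "d \<in> carrier G" and "a \<oplus> b = c \<oplus> d"
  shows "a \<ominus> c = d \<ominus> b"
proof -
  have cancel: "(x \<oplus> y) \<ominus> (z \<oplus> y) = x \<ominus> z"
    if "x \<in> carrier G" "y \<in> carrier G" "z \<in> carrier G" for x y z
    using that by (simp add: a_minus_def minus_add a_ac r_neg2)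
  have "a \<ominus> c = (a \<oplus> b) \<ominus> (c \<oplus> b)"
    using assms(1-4) by (simp add: cancel)
  also have "\<dots> = (d \<oplus> c) \<ominus> (b \<oplus> c)"
    using assms by (simp add: a_comm)
  also have "\<dots> = d \<ominus> b"
    using assms(1-4) by (simp add: cancel)
  finally show ?thesis .
qed

lemma left_module_abelian_group: "left_module L A \<Longrightarrow> abelian_group A"
  by (simp add: left_module_def)

lemma in_add_left_module: "in_add L W A \<Longrightarrow> left_module L A"
  by (simp add: in_add_def)

lemma left_module_smult_closed:
  "left_module L A \<Longrightarrow> r \<in> carrier L \<Longrightarrow> x \<in> carrier A \<Longrightarrow> r \<odot>\<^bsub>A\<^esub> x \<in> carrier A"
  by (simp add: left_module_def module_axioms_def)

lemma left_module_smult_add: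
  "left_module L A \<Longrightarrow> r \<in> carrier L \<Longrightarrow> x \<in> carrier A \<Longrightarrow> y \<in> carrier A \<Longrightarrow>
   r \<odot>\<^bsub>A\<^esub> (x \<oplus>\<^bsub>A\<^esub> y) = r \<odot>\<^bsub>A\<^esub> x \<oplus>\<^bsub>A\<^esub> r \<odot>\<^bsub>A\<^esub> y"
  by (simp add: left_module_def module_axioms_def)

lemma left_module_smult_zero:
  assumes A: "left_module L A" and r: "r \<in> carrier L"
  shows "r \<odot>\<^bsub>A\<^esub> \<zero>\<^bsub>A\<^esub> = \<zero>\<^bsub>A\<^esub>"
proof -
  interpret abelian_group A by (rule left_module_abelian_group[OF A])
  have "r \<odot>\<^bsub>A\<^esub> \<zero>\<^bsub>A\<^esub> \<oplus>\<^bsub>A\<^esub> r \<odot>\<^bsub>A\<^esub> \<zero>\<^bsub>A\<^esub> = r \<odot>\<^bsub>A\<^esub> \<zero>\<^bsub>A\<^esub>"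
    using left_module_smult_add[OF A r zero_closed zero_closed] by simp
  then show ?thesis
    using left_module_smult_closed[OF A r zero_closed] by simp
qed

lemma left_module_smult_minus:
  assumes A: "left_module L A" and r: "r \<in> carrier L" and x: "x \<in> carrier A"
  shows "r \<odot>\<^bsub>A\<^esub> (\<ominus>\<^bsub>A\<^esub> x) = \<ominus>\<^bsub>A\<^esub> (r \<odot>\<^bsub>A\<^esub> x)"
proof -
  interpret abelian_group A by (rule left_module_abelian_group[OF A])
  have "r \<odot>\<^bsub>A\<^esub> x \<oplus>\<^bsub>A\<^esub> r \<odot>\<^bsub>A\<^esub> (\<ominus>\<^bsub>A\<^esub> x) = \<zero>\<^bsub>A\<^esub>"
    using left_module_smult_add[OF A r x, of "\<ominus>\<^bsub>A\<^esub> x"] x r_neg left_module_smult_zero[OF A r]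
    by simp
  then have "r \<odot>\<^bsub>A\<^esub> (\<ominus>\<^bsub>A\<^esub> x) \<oplus>\<^bsub>A\<^esub> r \<odot>\<^bsub>A\<^esub> x = \<zero>\<^bsub>A\<^esub>"
    using x left_module_smult_closed[OF A r] by (simp add: a_comm)
  then show ?thesis
    using x left_module_smult_closed[OF A r] by (simp add: minus_equality)
qed

lemma lhom_closed: "lhom L D A f \<Longrightarrow> x \<in> carrier D \<Longrightarrow> f x \<in> carrier A"
  by (auto simp: lhom_def)

lemma lhom_add:
  "lhom L D A f \<Longrightarrow> x \<in> carrier D \<Longrightarrow> y \<in> carrier D \<Longrightarrow> f (x \<oplus>\<^bsub>D\<^esub> y) = f x \<oplus>\<^bsub>A\<^esub> f y"
  by (auto simp: lhom_def)

lemma lhom_smult: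
  "lhom L D A f \<Longrightarrow> r \<in> carrier L \<Longrightarrow> x \<in> carrier D \<Longrightarrow> f (r \<odot>\<^bsub>D\<^esub> x) = r \<odot>\<^bsub>A\<^esub> f x"
  by (auto simp: lhom_def)

lemma lhom_zero:
  assumes f: "lhom L D A f" and D: "abelian_group D" and A: "abelian_group A"
  shows "f \<zero>\<^bsub>D\<^esub> = \<zero>\<^bsub>A\<^esub>"
proof -
  interpret D: abelian_group D by fact
  interpret A: abelian_group A by fact
  have "f \<zero>\<^bsub>D\<^esub> \<oplus>\<^bsub>A\<^esub> f \<zero>\<^bsub>D\<^esub> = f \<zero>\<^bsub>D\<^esub>"
    using lhom_add[OF f D.zero_closed D.zero_closed] by simp
  then show ?thesis
    using lhom_closed[OF f D.zero_closed] by simp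
qed

lemma lhom_diff:
  assumes f: "lhom L D A f" and D: "abelian_group D" and A: "abelian_group A"
    and x: "x \<in> carrier D" and y: "y \<in> carrier D"
  shows "f (x \<ominus>\<^bsub>D\<^esub> y) = f x \<ominus>\<^bsub>A\<^esub> f y"
proof -
  interpret D: abelian_group D by fact
  interpret A: abelian_group A by fact
  have "f (x \<ominus>\<^bsub>D\<^esub> y) \<oplus>\<^bsub>A\<^esub> f y = f x"
    using lhom_add[OF f, of "x \<ominus>\<^bsub>D\<^esub> y" y] x y by (simp add: D.minus_add_cancel)
  also have "f x = (f x \<ominus>\<^bsub>A\<^esub> f y) \<oplus>\<^bsub>A\<^esub> f y"
    using x y lhom_closed[OF f] by (simp add: A.minus_add_cancel)
  finally show ?thesis
    using x y lhom_closed[OF f] by (simp add: A.add.right_cancel)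
qed

lemma lhom_comp: "lhom L A B f \<Longrightarrow> lhom L B C g \<Longrightarrow> lhom L A C (\<lambda>x. g (f x))"
  unfolding lhom_def Pi_def by auto

lemma lhom_restrict: "lhom L D A f \<Longrightarrow> S \<subseteq> carrier D \<Longrightarrow> lhom L (D\<lparr>carrier := S\<rparr>) A f"
  unfolding lhom_def Pi_def subset_iff by simp

lemma lhom_id: "lhom L D D (\<lambda>x. x)"
  by (auto simp: lhom_def)

lemma lhom_zero_map:
  assumes A: "left_module L A"
  shows "lhom L D A (\<lambda>_. \<zero>\<^bsub>A\<^esub>)"
proof -
  interpret abelian_group A by (rule left_module_abelian_group[OF A])
  show ?thesis by (simp add: lhom_def left_module_smult_zero[OF A])
qed

lemma lhom_add_fun:
  assumes f: "lhom L D A f" and g: "lhom L D A g" and A: "left_module L A"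
  shows "lhom L D A (\<lambda>x. f x \<oplus>\<^bsub>A\<^esub> g x)"
proof -
  interpret abelian_group A by (rule left_module_abelian_group[OF A])
  show ?thesis
    using f g unfolding lhom_def Pi_def
    by (auto simp: a_ac left_module_smult_add[OF A] left_module_smult_closed[OF A])
qed

lemma lhom_diff_fun:
  assumes f: "lhom L D A f" and g: "lhom L D A g" and A: "left_module L A"
  shows "lhom L D A (\<lambda>x. f x \<ominus>\<^bsub>A\<^esub> g x)"
proof -
  interpret abelian_group A by (rule left_module_abelian_group[OF A])
  have "lhom L D A (\<lambda>x. \<ominus>\<^bsub>A\<^esub> g x)"
    using g unfolding lhom_def Pi_def
    by (auto simp: minus_add left_module_smult_minus[OF A])
  then show ?thesis
    unfolding a_minus_def by (rule lhom_add_fun[OF f _ A])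
qed

lemma lhom_kernel_subset_imp_eq:
  assumes D: "left_module L D" and A: "left_module L A" and Y: "left_module L Y"
    and h: "lhom L D A h" and k: "lhom L D Y k"
    and ker: "\<forall>u\<in>carrier D. h u = \<zero>\<^bsub>A\<^esub> \<longrightarrow> k u = \<zero>\<^bsub>Y\<^esub>"
    and u: "u \<in> carrier D" "u' \<in> carrier D" and hu: "h u = h u'"
  shows "k u = k u'"
proof -
  interpret D: abelian_group D by (rule left_module_abelian_group[OF D])
  interpret A: abelian_group A by (rule left_module_abelian_group[OF A])
  interpret Y: abelian_group Y by (rule left_module_abelian_group[OF Y])
  have "h (u \<ominus>\<^bsub>D\<^esub> u') = h u \<ominus>\<^bsub>A\<^esub> h u'"
    by (rule lhom_diff[OF h D.abelian_group_axioms A.abelian_group_axioms u])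
  also have "\<dots> = \<zero>\<^bsub>A\<^esub>"
    by (simp add: hu A.minus_eq_zero_iff lhom_closed[OF h u(2)])
  finally have "k (u \<ominus>\<^bsub>D\<^esub> u') = \<zero>\<^bsub>Y\<^esub>"
    using ker u by simp
  then have "k u \<ominus>\<^bsub>Y\<^esub> k u' = \<zero>\<^bsub>Y\<^esub>"
    by (simp add: lhom_diff[OF k D.abelian_group_axioms Y.abelian_group_axioms u])
  then show ?thesis
    by (rule Y.minus_eq_zero_iff[THEN iffD1, OF lhom_closed[OF k u(1)] lhom_closed[OF k u(2)]])
qed

lemma lhom_factor_through_image:
  assumes D: "left_module L D" and A: "left_module L A" and Y: "left_module L Y"
    and h: "lhom L D A h" and k: "lhom L D Y k"
    and ker: "\<forall>u\<in>carrier D. h u = \<zero>\<^bsub>A\<^esub> \<longrightarrow> k u = \<zero>\<^bsub>Y\<^esub>"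
  obtains k' where "lhom L (A\<lparr>carrier := h ` carrier D\<rparr>) Y k'" and "\<forall>u\<in>carrier D. k' (h u) = k u"
proof -
  interpret D: abelian_group D by (rule left_module_abelian_group[OF D])
  define k' where "k' v = k (SOME u. u \<in> carrier D \<and> h u = v)" for v
  have k'h: "k' (h u) = k u" if "u \<in> carrier D" for u
  proof -
    have "\<exists>u'. u' \<in> carrier D \<and> h u' = h u"
      using that by blast
    then have "(SOME u'. u' \<in> carrier D \<and> h u' = h u) \<in> carrier D \<and> h (SOME u'. u' \<in> carrier D \<and> h u' = h u) = h u"
      by (rule someI_ex)
    then show ?thesis
      unfolding k'_def using lhom_kernel_subset_imp_eq[OF D A Y h k ker _ that] by blast
  qed
  have "lhom L (A\<lparr>carrier := h ` carrier D\<rparr>) Y k'"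
    unfolding lhom_def
  proof (intro conjI ballI)
    show "k' \<in> carrier (A\<lparr>carrier := h ` carrier D\<rparr>) \<rightarrow> carrier Y"
      using k'h lhom_closed[OF k] by auto
  next
    fix x y assume "x \<in> carrier (A\<lparr>carrier := h ` carrier D\<rparr>)" "y \<in> carrier (A\<lparr>carrier := h ` carrier D\<rparr>)"
    then obtain u u' where u: "u \<in> carrier D" "x = h u" and u': "u' \<in> carrier D" "y = h u'"
      by auto
    then show "k' (x \<oplus>\<^bsub>A\<lparr>carrier := h ` carrier D\<rparr>\<^esub> y) = k' x \<oplus>\<^bsub>Y\<^esub> k' y"
      using k'h[of "u \<oplus>\<^bsub>D\<^esub> u'"] lhom_add[OF h u(1) u'(1)] lhom_add[OF k u(1) u'(1)]
        k'h[OF u(1)] k'h[OF u'(1)] by simp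
  next
    fix c x assume c: "c \<in> carrier L" and "x \<in> carrier (A\<lparr>carrier := h ` carrier D\<rparr>)"
    then obtain u where u: "u \<in> carrier D" "x = h u"
      by auto
    then show "k' (c \<odot>\<^bsub>A\<lparr>carrier := h ` carrier D\<rparr>\<^esub> x) = c \<odot>\<^bsub>Y\<^esub> k' x"
      using k'h[OF left_module_smult_closed[OF D c u(1)]] lhom_smult[OF h c u(1)]
        lhom_smult[OF k c u(1)] k'h[OF u(1)] by simp
  qed
  then show ?thesis
    using that k'h by blast
qed

section \<open>Direct sums\<close>

text \<open>A direct sum of two modules in the universe type \<open>nat \<Rightarrow> 'w\<close> must again live
  there, so pairs are encoded by interleaving: even coordinates carry the first component
  and odd coordinates the second.\<close>

definition ipair :: "(nat \<Rightarrow> 'w) \<Rightarrow> (nat \<Rightarrow> 'w) \<Rightarrow> nat \<Rightarrow> 'w" where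
  "ipair a b = (\<lambda>n. if even n then a (n div 2) else b (n div 2))"

definition ifst :: "(nat \<Rightarrow> 'w) \<Rightarrow> nat \<Rightarrow> 'w" where
  "ifst x = (\<lambda>n. x (2 * n))"

definition isnd :: "(nat \<Rightarrow> 'w) \<Rightarrow> nat \<Rightarrow> 'w" where
  "isnd x = (\<lambda>n. x (2 * n + 1))"

lemma ifst_ipair [simp]: "ifst (ipair a b) = a"
  by (simp add: ifst_def ipair_def)

lemma isnd_ipair [simp]: "isnd (ipair a b) = b"
  by (simp add: isnd_def ipair_def)

lemma ipair_ifst_isnd [simp]: "ipair (ifst x) (isnd x) = x"
  unfolding ipair_def ifst_def isnd_def by (rule ext) (auto elim!: evenE oddE)

lemma ipair_eq_iff [simp]: "ipair a b = ipair c d \<longleftrightarrow> a = c \<and> b = d"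
  by (metis ifst_ipair isnd_ipair)

definition dsum :: "('a, 'w) umod \<Rightarrow> ('a, 'w) umod \<Rightarrow> ('a, 'w) umod" where
  "dsum A B = \<lparr>carrier = {x. ifst x \<in> carrier A \<and> isnd x \<in> carrier B},
     monoid.mult = (\<lambda>x y. undefined), one = undefined,
     ring.zero = ipair \<zero>\<^bsub>A\<^esub> \<zero>\<^bsub>B\<^esub>,
     ring.add = (\<lambda>x y. ipair (ifst x \<oplus>\<^bsub>A\<^esub> ifst y) (isnd x \<oplus>\<^bsub>B\<^esub> isnd y)),
     module.smult = (\<lambda>r x. ipair (r \<odot>\<^bsub>A\<^esub> ifst x) (r \<odot>\<^bsub>B\<^esub> isnd x))\<rparr>"

lemma dsum_simps [simp]:
  "carrier (dsum A B) = {x. ifst x \<in> carrier A \<and> isnd x \<in> carrier B}"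
  "\<zero>\<^bsub>dsum A B\<^esub> = ipair \<zero>\<^bsub>A\<^esub> \<zero>\<^bsub>B\<^esub>"
  "x \<oplus>\<^bsub>dsum A B\<^esub> y = ipair (ifst x \<oplus>\<^bsub>A\<^esub> ifst y) (isnd x \<oplus>\<^bsub>B\<^esub> isnd y)"
  "r \<odot>\<^bsub>dsum A B\<^esub> x = ipair (r \<odot>\<^bsub>A\<^esub> ifst x) (r \<odot>\<^bsub>B\<^esub> isnd x)"
  by (simp_all add: dsum_def)

lemma dsum_abelian_group:
  assumes "abelian_group A" and "abelian_group B"
  shows "abelian_group (dsum A B)"
proof -
  interpret A: abelian_group A by fact
  interpret B: abelian_group B by fact
  show ?thesis
  proof (rule abelian_groupI)
    fix x assume x: "x \<in> carrier (dsum A B)"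
    then show "\<exists>y\<in>carrier (dsum A B). y \<oplus>\<^bsub>dsum A B\<^esub> x = \<zero>\<^bsub>dsum A B\<^esub>"
      by (intro bexI[of _ "ipair (\<ominus>\<^bsub>A\<^esub> ifst x) (\<ominus>\<^bsub>B\<^esub> isnd x)"]) (simp_all add: A.l_neg B.l_neg)
  qed (auto simp: A.a_ac B.a_ac)
qed

lemma dsum_left_module:
  assumes A: "left_module L A" and B: "left_module L B"
  shows "left_module L (dsum A B)"
  using A B dsum_abelian_group[OF left_module_abelian_group[OF A] left_module_abelian_group[OF B]]
  by (simp add: left_module_def module_axioms_def)

lemma lhom_ifst: "lhom L (dsum A B) A ifst"
  by (auto simp: lhom_def)

lemma lhom_isnd: "lhom L (dsum A B) B isnd"
  by (auto simp: lhom_def)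

lemma lhom_ipair: "lhom L D A f \<Longrightarrow> lhom L D B g \<Longrightarrow> lhom L D (dsum A B) (\<lambda>x. ipair (f x) (g x))"
  by (auto simp: lhom_def)

lemma finsum_dsum:
  assumes A: "abelian_group A" and B: "abelian_group B" and I: "finite I"
    and F: "F \<in> I \<rightarrow> carrier (dsum A B)"
  shows "finsum (dsum A B) F I = ipair (finsum A (\<lambda>i. ifst (F i)) I) (finsum B (\<lambda>i. isnd (F i)) I)"
  using I F
proof (induction I rule: finite_induct)
  case empty
  interpret D: abelian_group "dsum A B" by (rule dsum_abelian_group[OF A B])
  interpret A: abelian_group A by fact
  interpret B: abelian_group B by fact
  show ?case by simp
next
  case (insert a I)
  interpret D: abelian_group "dsum A B" by (rule dsum_abelian_group[OF A B])
  interpret A: abelian_group A by fact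
  interpret B: abelian_group B by fact
  show ?case
    using insert by (simp add: D.finsum_insert A.finsum_insert B.finsum_insert Pi_def)
qed

lemma (in abelian_group) finsum_initial_segment:
  fixes m n :: nat
  assumes "F \<in> {i. i < m} \<rightarrow> carrier G"
  shows "finsum G (\<lambda>i. if i < m then F i else \<zero>) {i. i < m + n} = finsum G F {i. i < m}"
  using assms by (intro add.finprod_mono_neutral_cong_right) auto

lemma (in abelian_group) finsum_final_segment:
  fixes m n :: nat
  assumes "F \<in> {j. j < n} \<rightarrow> carrier G"
  shows "finsum G (\<lambda>i. if i < m then \<zero> else F (i - m)) {i. i < m + n} = finsum G F {j. j < n}"
proof -
  have "i \<in> (\<lambda>j. j + m) ` {j. j < n}" if "m \<le> i" "i < m + n" for i
    using that by (intro image_eqI[of _ _ "i - m"]) auto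
  then have "{i. i < m + n} - (\<lambda>j. j + m) ` {j. j < n} = {i. i < m}"
    by (auto simp: not_less) (meson not_less)
  then have "finsum G (\<lambda>i. if i < m then \<zero> else F (i - m)) {i. i < m + n}
      = finsum G (\<lambda>i. if i < m then \<zero> else F (i - m)) ((\<lambda>j. j + m) ` {j. j < n})"
    using assms by (intro add.finprod_mono_neutral_cong_right) (auto simp: Pi_def)
  also have "\<dots> = finsum G F {j. j < n}"
    using assms by (subst finsum_reindex) (auto simp: Pi_def)
  finally show ?thesis .
qed

lemma finsum_dsum_concat:
  fixes m n :: nat
  assumes A: "abelian_group A" and B: "abelian_group B"
    and F: "F \<in> {i. i < m} \<rightarrow> carrier A" and G: "G \<in> {j. j < n} \<rightarrow> carrier B"
  shows "finsum (dsum A B) (\<lambda>i. if i < m then ipair (F i) \<zero>\<^bsub>B\<^esub> else ipair \<zero>\<^bsub>A\<^esub> (G (i - m))) {i. i < m + n}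
    = ipair (finsum A F {i. i < m}) (finsum B G {j. j < n})"
proof -
  interpret A: abelian_group A by fact
  interpret B: abelian_group B by fact
  have "G (i - m) \<in> carrier B" if "\<not> i < m" "i < m + n" for i
    using that by (intro funcset_mem[OF G]) auto
  then have "(\<lambda>i. if i < m then ipair (F i) \<zero>\<^bsub>B\<^esub> else ipair \<zero>\<^bsub>A\<^esub> (G (i - m)))
      \<in> {i. i < m + n} \<rightarrow> carrier (dsum A B)"
    using F by auto
  moreover have "ifst (if i < m then ipair (F i) \<zero>\<^bsub>B\<^esub> else ipair \<zero>\<^bsub>A\<^esub> (G (i - m))) = (if i < m then F i else \<zero>\<^bsub>A\<^esub>)"
    and "isnd (if i < m then ipair (F i) \<zero>\<^bsub>B\<^esub> else ipair \<zero>\<^bsub>A\<^esub> (G (i - m))) = (if i < m then \<zero>\<^bsub>B\<^esub> else G (i - m))"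
    for i
    by simp_all
  ultimately show ?thesis
    using A.finsum_initial_segment[OF F] B.finsum_final_segment[OF G] by (simp add: finsum_dsum[OF A B])
qed

lemma in_addE:
  assumes "in_add L W A"
  obtains n :: nat and sc pr where "\<And>i. i < n \<Longrightarrow> lhom L A W (sc i)" and "\<And>i. i < n \<Longrightarrow> lhom L W A (pr i)"
    and "\<And>x. x \<in> carrier A \<Longrightarrow> finsum A (\<lambda>i. pr i (sc i x)) {i. i < n} = x"
  using assms unfolding in_add_def by metis

lemma in_add_dsum:
  assumes A: "in_add L W A" and B: "in_add L W B"
  shows "in_add L W (dsum A B)"
proof -
  have lA: "left_module L A" and lB: "left_module L B"
    using A B by (auto simp: in_add_def)
  interpret A: abelian_group A by (rule left_module_abelian_group[OF lA])
  interpret B: abelian_group B by (rule left_module_abelian_group[OF lB])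
  obtain nA :: nat and scA prA where scA: "\<And>i. i < nA \<Longrightarrow> lhom L A W (scA i)"
    and prA: "\<And>i. i < nA \<Longrightarrow> lhom L W A (prA i)"
    and sumA: "\<And>a. a \<in> carrier A \<Longrightarrow> finsum A (\<lambda>i. prA i (scA i a)) {i. i < nA} = a"
    using in_addE[OF A] by metis
  obtain nB :: nat and scB prB where scB: "\<And>i. i < nB \<Longrightarrow> lhom L B W (scB i)"
    and prB: "\<And>i. i < nB \<Longrightarrow> lhom L W B (prB i)"
    and sumB: "\<And>b. b \<in> carrier B \<Longrightarrow> finsum B (\<lambda>i. prB i (scB i b)) {i. i < nB} = b"
    using in_addE[OF B] by metis
  define sc where "sc i = (if i < nA then (\<lambda>x. scA i (ifst x)) else (\<lambda>x. scB (i - nA) (isnd x)))" for i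
  define pr where "pr i = (if i < nA then (\<lambda>w. ipair (prA i w) \<zero>\<^bsub>B\<^esub>)
    else (\<lambda>w. ipair \<zero>\<^bsub>A\<^esub> (prB (i - nA) w)))" for i
  have hom: "lhom L (dsum A B) W (sc i) \<and> lhom L W (dsum A B) (pr i)" if "i < nA + nB" for i
    using that lhom_comp[OF lhom_ifst scA] lhom_ipair[OF prA lhom_zero_map[OF lB]]
      lhom_comp[OF lhom_isnd scB] lhom_ipair[OF lhom_zero_map[OF lA] prB]
    by (simp add: sc_def pr_def)
  have sum: "x = finsum (dsum A B) (\<lambda>i. pr i (sc i x)) {i. i < nA + nB}" if x: "x \<in> carrier (dsum A B)" for x
  proof -
    have FA: "(\<lambda>i. prA i (scA i (ifst x))) \<in> {i. i < nA} \<rightarrow> carrier A"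
      and FB: "(\<lambda>j. prB j (scB j (isnd x))) \<in> {j. j < nB} \<rightarrow> carrier B"
      using x lhom_closed[OF prA lhom_closed[OF scA]] lhom_closed[OF prB lhom_closed[OF scB]] by auto
    have "(\<lambda>i. pr i (sc i x)) = (\<lambda>i. if i < nA then ipair (prA i (scA i (ifst x))) \<zero>\<^bsub>B\<^esub>
        else ipair \<zero>\<^bsub>A\<^esub> (prB (i - nA) (scB (i - nA) (isnd x))))"
      by (simp add: fun_eq_iff pr_def sc_def)
    then show ?thesis
      using x sumA[of "ifst x"] sumB[of "isnd x"]
      by (simp add: finsum_dsum_concat[OF A.abelian_group_axioms B.abelian_group_axioms FA FB])
  qed
  show ?thesis
    unfolding in_add_def using dsum_left_module[OF lA lB] hom sum
    by (intro conjI exI[of _ "nA + nB"] exI[of _ sc] exI[of _ pr]) auto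
qed

section \<open>Extending maps into \<open>add \<omega>\<close>\<close>

definition add_extendable :: "'a ring \<Rightarrow> ('a, 'w) module \<Rightarrow> ('a, 'w) umod \<Rightarrow> (nat \<Rightarrow> 'w) set \<Rightarrow> bool" where
  "add_extendable L W V S \<longleftrightarrow> (\<forall>(Y :: ('a, 'w) umod) g. in_add L W Y \<and> lhom L (V\<lparr>carrier := S\<rparr>) Y g \<longrightarrow>
      (\<exists>h. lhom L V Y h \<and> (\<forall>z\<in>S. g z = h z)))"

lemma left_approx_inclusion_iff:
  "left_approx L W (V\<lparr>carrier := S\<rparr>) V id \<longleftrightarrow> in_add L W V \<and> S \<subseteq> carrier V \<and> add_extendable L W V S"
proof -
  have "lhom L (V\<lparr>carrier := S\<rparr>) V id \<longleftrightarrow> S \<subseteq> carrier V"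
    unfolding lhom_def by auto
  then show ?thesis
    unfolding left_approx_def add_extendable_def by simp
qed

definition module_retraction :: "'a ring \<Rightarrow> ('a, 'm) module \<Rightarrow> 'm set \<Rightarrow> 'm set \<Rightarrow> ('m \<Rightarrow> 'm) \<Rightarrow> bool" where
  "module_retraction L V U S r \<longleftrightarrow> S \<subseteq> U \<and> U \<subseteq> carrier V \<and>
     lhom L (V\<lparr>carrier := U\<rparr>) V r \<and> r ` U \<subseteq> S \<and> (\<forall>s\<in>S. r s = s)"

lemma module_retraction_lhom:
  "module_retraction L V U S r \<Longrightarrow> lhom L (V\<lparr>carrier := U\<rparr>) (V\<lparr>carrier := S\<rparr>) r"
  by (auto simp: module_retraction_def lhom_def)

lemma add_extendable_retract:
  assumes U: "add_extendable L W V U" and r: "module_retraction L V U S r"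
  shows "add_extendable L W V S"
  unfolding add_extendable_def
proof (intro allI impI)
  fix Y :: "('a, 'b) umod" and g
  assume Y: "in_add L W Y \<and> lhom L (V\<lparr>carrier := S\<rparr>) Y g"
  then have "lhom L (V\<lparr>carrier := U\<rparr>) Y (\<lambda>u. g (r u))"
    using lhom_comp[OF module_retraction_lhom[OF r]] by blast
  then obtain h where h: "lhom L V Y h" "\<forall>u\<in>U. g (r u) = h u"
    using U Y unfolding add_extendable_def by blast
  have "g s = h s" if "s \<in> S" for s
    using r h(2) that unfolding module_retraction_def by (metis subsetD)
  then show "\<exists>h. lhom L V Y h \<and> (\<forall>z\<in>S. g z = h z)"
    using h(1) by blast
qed

lemma module_retraction_transfer:
  assumes M: "left_module L M" and f: "lhom L M V f" and inj: "inj_on f (carrier M)"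
    and p: "lhom L M M p" "p ` carrier M \<subseteq> N" "\<forall>a\<in>N. p a = a" and N: "N \<subseteq> carrier M"
  shows "module_retraction L V (f ` carrier M) (f ` N) (\<lambda>x. f (p (the_inv_into (carrier M) f x)))"
proof -
  interpret abelian_group M by (rule left_module_abelian_group[OF M])
  define r where "r x = f (p (the_inv_into (carrier M) f x))" for x
  have rf: "r (f z) = f (p z)" if "z \<in> carrier M" for z
    using inj that by (simp add: r_def the_inv_into_f_f)
  have "lhom L (V\<lparr>carrier := f ` carrier M\<rparr>) V r"
    unfolding lhom_def
  proof (intro conjI ballI)
    show "r \<in> carrier (V\<lparr>carrier := f ` carrier M\<rparr>) \<rightarrow> carrier V"
      using rf lhom_closed[OF f] lhom_closed[OF p(1)] by auto
  next
    fix x y assume "x \<in> carrier (V\<lparr>carrier := f ` carrier M\<rparr>)" "y \<in> carrier (V\<lparr>carrier := f ` carrier M\<rparr>)"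
    then obtain z z' where z: "z \<in> carrier M" "x = f z" and z': "z' \<in> carrier M" "y = f z'"
      by auto
    have "r (x \<oplus>\<^bsub>V\<lparr>carrier := f ` carrier M\<rparr>\<^esub> y) = r (f (z \<oplus>\<^bsub>M\<^esub> z'))"
      using z z' lhom_add[OF f z(1) z'(1)] by simp
    also have "\<dots> = f (p z \<oplus>\<^bsub>M\<^esub> p z')"
      using z z' rf lhom_add[OF p(1) z(1) z'(1)] by simp
    also have "\<dots> = r x \<oplus>\<^bsub>V\<^esub> r y"
      using z z' rf lhom_add[OF f lhom_closed[OF p(1) z(1)] lhom_closed[OF p(1) z'(1)]] by simp
    finally show "r (x \<oplus>\<^bsub>V\<lparr>carrier := f ` carrier M\<rparr>\<^esub> y) = r x \<oplus>\<^bsub>V\<^esub> r y" .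
  next
    fix c x assume c: "c \<in> carrier L" and "x \<in> carrier (V\<lparr>carrier := f ` carrier M\<rparr>)"
    then obtain z where z: "z \<in> carrier M" "x = f z"
      by auto
    have "r (c \<odot>\<^bsub>V\<lparr>carrier := f ` carrier M\<rparr>\<^esub> x) = r (f (c \<odot>\<^bsub>M\<^esub> z))"
      using z lhom_smult[OF f c z(1)] by simp
    also have "\<dots> = f (c \<odot>\<^bsub>M\<^esub> p z)"
      using z rf lhom_smult[OF p(1) c z(1)] left_module_smult_closed[OF M c] by simp
    also have "\<dots> = c \<odot>\<^bsub>V\<^esub> r x"
      using z rf lhom_smult[OF f c lhom_closed[OF p(1) z(1)]] by simp
    finally show "r (c \<odot>\<^bsub>V\<lparr>carrier := f ` carrier M\<rparr>\<^esub> x) = c \<odot>\<^bsub>V\<^esub> r x" .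
  qed
  moreover have "r ` f ` carrier M \<subseteq> f ` N" "\<forall>s\<in>f ` N. r s = s" "f ` carrier M \<subseteq> carrier V"
    using rf p N lhom_closed[OF f] by auto
  ultimately show ?thesis
    using N unfolding module_retraction_def r_def[abs_def] by blast
qed

lemma add_extendable_dsum:
  assumes S: "add_extendable L W A S" "S \<subseteq> carrier A" "\<zero>\<^bsub>A\<^esub> \<in> S"
    and A: "left_module L A" and B: "left_module L B"
  shows "add_extendable L W (dsum A B) {x. ifst x \<in> S \<and> isnd x \<in> carrier B}"
  unfolding add_extendable_def
proof (intro allI impI)
  interpret A: abelian_group A by (rule left_module_abelian_group[OF A])
  interpret B: abelian_group B by (rule left_module_abelian_group[OF B])
  fix Y :: "('a, 'b) umod" and \<phi>
  let ?T = "{x. ifst x \<in> S \<and> isnd x \<in> carrier B}"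
  assume Y\<phi>: "in_add L W Y \<and> lhom L ((dsum A B)\<lparr>carrier := ?T\<rparr>) Y \<phi>"
  then have Y: "left_module L Y" and \<phi>: "lhom L ((dsum A B)\<lparr>carrier := ?T\<rparr>) Y \<phi>"
    using in_add_left_module by blast+
  interpret Y: abelian_group Y by (rule left_module_abelian_group[OF Y])
  have "lhom L (A\<lparr>carrier := S\<rparr>) ((dsum A B)\<lparr>carrier := ?T\<rparr>) (\<lambda>a. ipair a \<zero>\<^bsub>B\<^esub>)"
    using S(2) by (auto simp: lhom_def left_module_smult_zero[OF B])
  then obtain \<alpha> where \<alpha>: "lhom L A Y \<alpha>" "\<forall>a\<in>S. \<phi> (ipair a \<zero>\<^bsub>B\<^esub>) = \<alpha> a"
    using S(1) Y\<phi> lhom_comp[of L "A\<lparr>carrier := S\<rparr>" _ _ Y \<phi>] unfolding add_extendable_def by blast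
  have "lhom L B ((dsum A B)\<lparr>carrier := ?T\<rparr>) (\<lambda>b. ipair \<zero>\<^bsub>A\<^esub> b)"
    using S(3) by (auto simp: lhom_def left_module_smult_zero[OF A] left_module_smult_closed[OF B])
  then have \<beta>: "lhom L B Y (\<lambda>b. \<phi> (ipair \<zero>\<^bsub>A\<^esub> b))"
    using lhom_comp[OF _ \<phi>] by blast
  define H where "H x = \<alpha> (ifst x) \<oplus>\<^bsub>Y\<^esub> \<phi> (ipair \<zero>\<^bsub>A\<^esub> (isnd x))" for x
  have "lhom L (dsum A B) Y H"
    unfolding H_def by (rule lhom_add_fun[OF lhom_comp[OF lhom_ifst \<alpha>(1)] lhom_comp[OF lhom_isnd \<beta>] Y])
  moreover have "\<phi> x = H x" if x: "x \<in> ?T" for x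
  proof -
    have "x = ipair (ifst x) \<zero>\<^bsub>B\<^esub> \<oplus>\<^bsub>dsum A B\<^esub> ipair \<zero>\<^bsub>A\<^esub> (isnd x)"
      using x S(2) by auto
    then have "\<phi> x = \<phi> (ipair (ifst x) \<zero>\<^bsub>B\<^esub>) \<oplus>\<^bsub>Y\<^esub> \<phi> (ipair \<zero>\<^bsub>A\<^esub> (isnd x))"
      using lhom_add[OF \<phi>, of "ipair (ifst x) \<zero>\<^bsub>B\<^esub>" "ipair \<zero>\<^bsub>A\<^esub> (isnd x)"] x S(3) by simp
    then show ?thesis
      using \<alpha>(2) x by (simp add: H_def)
  qed
  ultimately show "\<exists>h. lhom L (dsum A B) Y h \<and> (\<forall>z\<in>?T. \<phi> z = h z)"
    by blast
qed

definition id_minus_maps_kernel :: "('a, 'm) module \<Rightarrow> ('a, 'n) module \<Rightarrow> ('m \<Rightarrow> 'n) \<Rightarrow> ('m \<Rightarrow> 'm) \<Rightarrow> bool" where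
  "id_minus_maps_kernel D A h e \<longleftrightarrow>
     (\<forall>u\<in>carrier D. h u = \<zero>\<^bsub>A\<^esub> \<longrightarrow> h (u \<ominus>\<^bsub>D\<^esub> e u) = \<zero>\<^bsub>A\<^esub> \<and> e (u \<ominus>\<^bsub>D\<^esub> e u) = \<zero>\<^bsub>D\<^esub>)"

lemma graph_retraction_via_factor:
  assumes D: "left_module L D" and A: "left_module L A"
    and h: "lhom L D A h" and e: "lhom L D D e"
    and k: "lhom L (A\<lparr>carrier := h ` carrier D\<rparr>) (dsum A D) k"
    and kh: "\<forall>u\<in>carrier D. k (h u) = ipair (h (u \<ominus>\<^bsub>D\<^esub> e u)) (e (u \<ominus>\<^bsub>D\<^esub> e u))"
  shows "module_retraction L (dsum A D) {x. ifst x \<in> h ` carrier D \<and> isnd x \<in> carrier D}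
    ((\<lambda>z. ipair (h z) (e z)) ` carrier D) (\<lambda>x. k (ifst x) \<oplus>\<^bsub>dsum A D\<^esub> ipair (h (isnd x)) (e (isnd x)))"
proof -
  interpret D: abelian_group D by (rule left_module_abelian_group[OF D])
  have DA: "left_module L (dsum A D)" by (rule dsum_left_module[OF A D])
  let ?U = "{x. ifst x \<in> h ` carrier D \<and> isnd x \<in> carrier D}"
  define d where "d z = ipair (h z) (e z)" for z
  define r where "r x = k (ifst x) \<oplus>\<^bsub>dsum A D\<^esub> d (isnd x)" for x
  have d: "lhom L D (dsum A D) d"
    unfolding d_def by (rule lhom_ipair[OF h e])
  have "lhom L ((dsum A D)\<lparr>carrier := ?U\<rparr>) (A\<lparr>carrier := h ` carrier D\<rparr>) ifst"
    and "lhom L ((dsum A D)\<lparr>carrier := ?U\<rparr>) D isnd"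
    by (auto simp: lhom_def)
  then have r: "lhom L ((dsum A D)\<lparr>carrier := ?U\<rparr>) (dsum A D) r"
    unfolding r_def by (intro lhom_add_fun[OF lhom_comp[OF _ k] lhom_comp[OF _ d] DA])
  have d_add: "d a \<oplus>\<^bsub>dsum A D\<^esub> d b = d (a \<oplus>\<^bsub>D\<^esub> b)" if "a \<in> carrier D" "b \<in> carrier D" for a b
    using lhom_add[OF d that] by simp
  have "r x \<in> d ` carrier D" if x: "x \<in> ?U" for x
  proof -
    obtain u where u: "u \<in> carrier D" "ifst x = h u"
      using x by auto
    then have "r x = d ((u \<ominus>\<^bsub>D\<^esub> e u) \<oplus>\<^bsub>D\<^esub> isnd x)"
      using x kh d_add[of "u \<ominus>\<^bsub>D\<^esub> e u" "isnd x"] lhom_closed[OF e u(1)] by (simp add: r_def d_def)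
    then show ?thesis
      using x u lhom_closed[OF e u(1)] by auto
  qed
  moreover have "r s = s" if s: "s \<in> d ` carrier D" for s
  proof -
    obtain z where z: "z \<in> carrier D" "s = d z"
      using s by auto
    then have "r s = d ((z \<ominus>\<^bsub>D\<^esub> e z) \<oplus>\<^bsub>D\<^esub> e z)"
      using kh d_add[of "z \<ominus>\<^bsub>D\<^esub> e z" "e z"] lhom_closed[OF e z(1)] by (simp add: r_def d_def)
    then show ?thesis
      using z lhom_closed[OF e] by (simp add: D.minus_add_cancel)
  qed
  moreover have "d ` carrier D \<subseteq> ?U" "?U \<subseteq> carrier (dsum A D)"
    using lhom_closed[OF e] lhom_closed[OF h] by (auto simp: d_def)
  ultimately have "module_retraction L (dsum A D) ?U (d ` carrier D) r"
    unfolding module_retraction_def using r by blast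
  then show ?thesis
    unfolding r_def[abs_def] d_def[abs_def] .
qed

text \<open>With \<open>d = (h, e)\<close>, the map \<open>u \<mapsto> d (u - e u)\<close> vanishes on the kernel of \<open>h\<close>, so it
  factors through \<open>h\<close>; this factorization together with \<open>d\<close> retracts \<open>h(D) \<times> D\<close> onto the
  graph \<open>d(D)\<close>.\<close>

lemma graph_retraction:
  assumes D: "left_module L D" and A: "left_module L A"
    and h: "lhom L D A h" and e: "lhom L D D e"
    and key: "id_minus_maps_kernel D A h e"
  obtains r where "module_retraction L (dsum A D) {x. ifst x \<in> h ` carrier D \<and> isnd x \<in> carrier D}
    ((\<lambda>z. ipair (h z) (e z)) ` carrier D) r"
proof -
  have DA: "left_module L (dsum A D)" by (rule dsum_left_module[OF A D])
  have "lhom L D (dsum A D) (\<lambda>u. ipair (h (u \<ominus>\<^bsub>D\<^esub> e u)) (e (u \<ominus>\<^bsub>D\<^esub> e u)))"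
    by (rule lhom_comp[OF lhom_diff_fun[OF lhom_id e D] lhom_ipair[OF h e]])
  moreover have "\<forall>u\<in>carrier D. h u = \<zero>\<^bsub>A\<^esub> \<longrightarrow> ipair (h (u \<ominus>\<^bsub>D\<^esub> e u)) (e (u \<ominus>\<^bsub>D\<^esub> e u)) = \<zero>\<^bsub>dsum A D\<^esub>"
    using key by (simp add: id_minus_maps_kernel_def)
  ultimately obtain k where "lhom L (A\<lparr>carrier := h ` carrier D\<rparr>) (dsum A D) k"
    and "\<forall>u\<in>carrier D. k (h u) = ipair (h (u \<ominus>\<^bsub>D\<^esub> e u)) (e (u \<ominus>\<^bsub>D\<^esub> e u))"
    by (rule lhom_factor_through_image[OF D A DA h])
  then show ?thesis
    using that graph_retraction_via_factor[OF D A h e] by blast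
qed

lemma retraction_complement_extends:
  assumes D: "in_add L W D" and U: "add_extendable L W D U" and r: "module_retraction L D U S r"
  obtains e where "lhom L D D e" and "\<forall>u\<in>U. e u = u \<ominus>\<^bsub>D\<^esub> r u"
proof -
  have "U \<subseteq> carrier D" and "lhom L (D\<lparr>carrier := U\<rparr>) D r"
    using r by (auto simp: module_retraction_def)
  then have "lhom L (D\<lparr>carrier := U\<rparr>) D (\<lambda>u. u \<ominus>\<^bsub>D\<^esub> r u)"
    using lhom_diff_fun[OF lhom_restrict[OF lhom_id] _ in_add_left_module[OF D]] by blast
  then show ?thesis
    using U D that unfolding add_extendable_def by fastforce
qed

lemma kernel_correction:
  assumes D: "in_add L W D" and h: "lhom L D A h"
    and U: "add_extendable L W D U" and ker: "{z \<in> carrier D. h z = \<zero>\<^bsub>A\<^esub>} = U"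
    and r: "module_retraction L D U S r"
  obtains e where "lhom L D D e" and "\<forall>s\<in>S. e s = \<zero>\<^bsub>D\<^esub>"
    and "id_minus_maps_kernel D A h e"
    and "{z \<in> carrier D. h z = \<zero>\<^bsub>A\<^esub> \<and> e z = \<zero>\<^bsub>D\<^esub>} = S"
proof -
  interpret D: abelian_group D by (rule left_module_abelian_group[OF in_add_left_module[OF D]])
  have SU: "S \<subseteq> U" and UD: "U \<subseteq> carrier D" and rU: "\<forall>u\<in>U. r u \<in> S" and rS: "\<forall>s\<in>S. r s = s"
    using r by (auto simp: module_retraction_def)
  obtain e where e: "lhom L D D e" and eU: "\<forall>u\<in>U. e u = u \<ominus>\<^bsub>D\<^esub> r u"
    by (rule retraction_complement_extends[OF D U r])
  have eS: "e s = \<zero>\<^bsub>D\<^esub>" if s: "s \<in> S" for s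
  proof -
    have "s \<in> U" and "s \<in> carrier D"
      using s SU UD by auto
    then show ?thesis
      using eU rS s D.minus_eq_zero_iff by simp
  qed
  have "id_minus_maps_kernel D A h e"
    unfolding id_minus_maps_kernel_def
  proof (intro ballI impI)
    fix u assume u: "u \<in> carrier D" "h u = \<zero>\<^bsub>A\<^esub>"
    have "u \<in> U"
      using u ker by blast
    then have "r u \<in> S" and "e u = u \<ominus>\<^bsub>D\<^esub> r u"
      using eU rU by auto
    then have "u \<ominus>\<^bsub>D\<^esub> e u = r u" and "r u \<in> S"
      using u SU UD by (auto simp: D.minus_minus_cancel)
    then show "h (u \<ominus>\<^bsub>D\<^esub> e u) = \<zero>\<^bsub>A\<^esub> \<and> e (u \<ominus>\<^bsub>D\<^esub> e u) = \<zero>\<^bsub>D\<^esub>"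
      using eS ker SU by auto
  qed
  moreover have "{z \<in> carrier D. h z = \<zero>\<^bsub>A\<^esub> \<and> e z = \<zero>\<^bsub>D\<^esub>} = S"
  proof (intro equalityI subsetI)
    fix z assume "z \<in> {z \<in> carrier D. h z = \<zero>\<^bsub>A\<^esub> \<and> e z = \<zero>\<^bsub>D\<^esub>}"
    then have "z \<in> U" and "z \<ominus>\<^bsub>D\<^esub> r z = \<zero>\<^bsub>D\<^esub>"
      using ker eU by auto
    then show "z \<in> S"
      using rU UD SU D.minus_eq_zero_iff by (metis subsetD)
  next
    fix s assume "s \<in> S"
    then show "s \<in> {z \<in> carrier D. h z = \<zero>\<^bsub>A\<^esub> \<and> e z = \<zero>\<^bsub>D\<^esub>}"
      using eS ker SU by auto
  qed
  ultimately show ?thesis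
    using that e eS by blast
qed

lemma correction_endomorphism:
  assumes D: "in_add L W D" and h: "lhom L D A h"
    and U: "add_extendable L W D U" and ker: "P \<Longrightarrow> {z \<in> carrier D. h z = \<zero>\<^bsub>A\<^esub>} = U"
    and r: "module_retraction L D U S r"
  obtains e where "lhom L D D e" and "\<forall>s\<in>S. e s = \<zero>\<^bsub>D\<^esub>"
    and "id_minus_maps_kernel D A h e"
    and "P \<longrightarrow> {z \<in> carrier D. h z = \<zero>\<^bsub>A\<^esub> \<and> e z = \<zero>\<^bsub>D\<^esub>} = S"
proof (cases P)
  case True
  obtain e where "lhom L D D e" and "\<forall>s\<in>S. e s = \<zero>\<^bsub>D\<^esub>"
    and "id_minus_maps_kernel D A h e"
    and "{z \<in> carrier D. h z = \<zero>\<^bsub>A\<^esub> \<and> e z = \<zero>\<^bsub>D\<^esub>} = S"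
    by (rule kernel_correction[OF D h U ker[OF True] r])
  then show ?thesis
    using that True by blast
next
  case False
  have Dl: "left_module L D"
    by (rule in_add_left_module[OF D])
  interpret D: abelian_group D by (rule left_module_abelian_group[OF Dl])
  have "u \<ominus>\<^bsub>D\<^esub> \<zero>\<^bsub>D\<^esub> = u" if "u \<in> carrier D" for u
    using D.minus_add_cancel[OF that D.zero_closed] that by simp
  then show ?thesis
    by (intro that[OF lhom_zero_map[OF Dl]]) (auto simp: False id_minus_maps_kernel_def)
qed

section \<open>The complex of a direct summand\<close>

locale internal_direct_sum =
  fixes L :: "'a ring" and M :: "('a, 'm) module" and N1 N2 :: "'m set"
  assumes M: "left_module L M"
    and N1: "left_submodule L M N1" and N2: "left_submodule L M N2"
    and disj: "N1 \<inter> N2 = {\<zero>\<^bsub>M\<^esub>}" and carrier_eq: "carrier M = {x \<oplus>\<^bsub>M\<^esub> y | x y. x \<in> N1 \<and> y \<in> N2}"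
begin

interpretation M: abelian_group M
  by (rule left_module_abelian_group[OF M])

lemma N1_carrier: "N1 \<subseteq> carrier M" and N2_carrier: "N2 \<subseteq> carrier M"
  using N1 N2 by (auto simp: left_submodule_def)

lemma components_unique:
  assumes a: "a \<in> N1" "a' \<in> N1" and b: "b \<in> N2" "b' \<in> N2" and eq: "a \<oplus>\<^bsub>M\<^esub> b = a' \<oplus>\<^bsub>M\<^esub> b'"
  shows "a = a'"
proof -
  have c: "a \<in> carrier M" "a' \<in> carrier M" "b \<in> carrier M" "b' \<in> carrier M"
    using a b N1_carrier N2_carrier by auto
  have "a \<ominus>\<^bsub>M\<^esub> a' = b' \<ominus>\<^bsub>M\<^esub> b"
    by (rule M.add_eq_add_imp_minus_eq[OF c(1,3,2,4) eq])
  moreover have "a \<ominus>\<^bsub>M\<^esub> a' \<in> N1" and "b' \<ominus>\<^bsub>M\<^esub> b \<in> N2"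
    using a b N1 N2 by (simp_all add: left_submodule_def a_minus_def)
  ultimately have "a \<ominus>\<^bsub>M\<^esub> a' = \<zero>\<^bsub>M\<^esub>"
    using disj by auto
  then show ?thesis
    using c M.minus_eq_zero_iff by blast
qed

definition proj1 :: "'m \<Rightarrow> 'm" where
  "proj1 z = (THE a. a \<in> N1 \<and> (\<exists>b\<in>N2. z = a \<oplus>\<^bsub>M\<^esub> b))"

lemma proj1_eq: "a \<in> N1 \<Longrightarrow> b \<in> N2 \<Longrightarrow> proj1 (a \<oplus>\<^bsub>M\<^esub> b) = a"
  unfolding proj1_def using components_unique by (intro the_equality) blast+

lemma components_exist:
  assumes "z \<in> carrier M"
  obtains a b where "a \<in> N1" and "b \<in> N2" and "z = a \<oplus>\<^bsub>M\<^esub> b"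
  using assms carrier_eq by blast

lemma proj1_image: "proj1 ` carrier M \<subseteq> N1"
  using components_exist proj1_eq by (metis image_subsetI)

lemma proj1_id: "a \<in> N1 \<Longrightarrow> proj1 a = a"
  using proj1_eq[of a "\<zero>\<^bsub>M\<^esub>"] N1_carrier N2 by (auto simp: left_submodule_def)

lemma proj1_lhom: "lhom L M M proj1"
  unfolding lhom_def
proof (intro conjI ballI)
  show "proj1 \<in> carrier M \<rightarrow> carrier M"
    using proj1_image N1_carrier by auto
next
  fix x y assume "x \<in> carrier M" "y \<in> carrier M"
  then obtain a b a' b' where ab: "a \<in> N1" "b \<in> N2" "x = a \<oplus>\<^bsub>M\<^esub> b"
    and ab': "a' \<in> N1" "b' \<in> N2" "y = a' \<oplus>\<^bsub>M\<^esub> b'"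
    by (metis components_exist)
  have "a \<in> carrier M" "a' \<in> carrier M" "b \<in> carrier M" "b' \<in> carrier M"
    using ab ab' N1_carrier N2_carrier by auto
  then have "x \<oplus>\<^bsub>M\<^esub> y = (a \<oplus>\<^bsub>M\<^esub> a') \<oplus>\<^bsub>M\<^esub> (b \<oplus>\<^bsub>M\<^esub> b')"
    using ab(3) ab'(3) by (simp add: M.a_ac)
  moreover have "a \<oplus>\<^bsub>M\<^esub> a' \<in> N1" "b \<oplus>\<^bsub>M\<^esub> b' \<in> N2"
    using ab ab' N1 N2 by (auto simp: left_submodule_def)
  ultimately show "proj1 (x \<oplus>\<^bsub>M\<^esub> y) = proj1 x \<oplus>\<^bsub>M\<^esub> proj1 y"
    using ab ab' proj1_eq by simp
next
  fix c x assume c: "c \<in> carrier L" and "x \<in> carrier M"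
  then obtain a b where ab: "a \<in> N1" "b \<in> N2" "x = a \<oplus>\<^bsub>M\<^esub> b"
    by (metis components_exist)
  have "c \<odot>\<^bsub>M\<^esub> x = c \<odot>\<^bsub>M\<^esub> a \<oplus>\<^bsub>M\<^esub> c \<odot>\<^bsub>M\<^esub> b"
    using ab N1_carrier N2_carrier left_module_smult_add[OF M c] by auto
  moreover have "c \<odot>\<^bsub>M\<^esub> a \<in> N1" "c \<odot>\<^bsub>M\<^esub> b \<in> N2"
    using ab c N1 N2 by (auto simp: left_submodule_def)
  ultimately show "proj1 (c \<odot>\<^bsub>M\<^esub> x) = c \<odot>\<^bsub>M\<^esub> proj1 x"
    using ab proj1_eq by simp
qed

end

locale summand_complex = internal_direct_sum L M N1 N2
  for L :: "'a ring" and M :: "('a, 'm) module" and N1 N2 :: "'m set" +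
  fixes W :: "('a, 'w) module" and f1 :: "'m \<Rightarrow> nat \<Rightarrow> 'w" and Ws :: "nat \<Rightarrow> ('a, 'w) umod"
    and g :: "nat \<Rightarrow> (nat \<Rightarrow> 'w) \<Rightarrow> nat \<Rightarrow> 'w" and exact_pos :: "nat \<Rightarrow> bool"
  assumes complex: "app_complex L W M f1 Ws g" and inj: "inj_on f1 (carrier M)"
    and exact: "\<And>i. exact_pos i \<Longrightarrow> 1 \<le> i \<Longrightarrow> exact_at M f1 Ws g i"
begin

lemma Ws_in_add: "1 \<le> i \<Longrightarrow> in_add L W (Ws i)"
  using complex by (simp add: app_complex_def)

lemma g_lhom: "1 \<le> i \<Longrightarrow> lhom L (Ws i) (Ws (Suc i)) (g i)"
  using complex by (simp add: app_complex_def)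

lemma g_g_zero: "1 \<le> i \<Longrightarrow> x \<in> carrier (Ws i) \<Longrightarrow> g (Suc i) (g i x) = \<zero>\<^bsub>Ws (Suc (Suc i))\<^esub>"
  using complex by (simp add: app_complex_def)

lemma g_image_extendable: "1 \<le> i \<Longrightarrow> add_extendable L W (Ws (Suc i)) (g i ` carrier (Ws i))"
  using complex unfolding app_complex_def by (simp add: left_approx_inclusion_iff)

text \<open>\<open>D\<close> is the term at position \<open>i\<close> of the new complex and \<open>S\<close> the image of its
  incoming map; \<open>h\<close> connects \<open>D\<close> to the old complex, and \<open>U\<close> plays the role of the
  image of the old incoming map.\<close>

definition approx_stage :: "nat \<Rightarrow> ('a, 'w) umod \<Rightarrow> (nat \<Rightarrow> 'w) set \<Rightarrow> bool" where
  "approx_stage i D S \<longleftrightarrow> in_add L W D \<and> add_extendable L W D S \<and>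
     (\<exists>h U r. lhom L D (Ws (Suc i)) h \<and> h ` carrier D = g i ` carrier (Ws i) \<and>
        (\<forall>u\<in>U. h u = \<zero>\<^bsub>Ws (Suc i)\<^esub>) \<and> add_extendable L W D U \<and> module_retraction L D U S r \<and>
        (exact_pos i \<longrightarrow> {z \<in> carrier D. h z = \<zero>\<^bsub>Ws (Suc i)\<^esub>} = U))"

definition stage_step :: "nat \<Rightarrow> ('a, 'w) umod \<Rightarrow> (nat \<Rightarrow> 'w) set
    \<Rightarrow> ((nat \<Rightarrow> 'w) \<Rightarrow> nat \<Rightarrow> 'w) \<Rightarrow> ('a, 'w) umod \<Rightarrow> bool" where
  "stage_step i D S d D' \<longleftrightarrow> lhom L D D' d \<and> (\<forall>s\<in>S. d s = \<zero>\<^bsub>D'\<^esub>) \<and>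
     (exact_pos i \<longrightarrow> {z \<in> carrier D. d z = \<zero>\<^bsub>D'\<^esub>} = S) \<and> approx_stage (Suc i) D' (d ` carrier D)"

lemma approx_stage_left_approx: "approx_stage i D S \<Longrightarrow> left_approx L W (D\<lparr>carrier := S\<rparr>) D id"
  unfolding approx_stage_def module_retraction_def left_approx_inclusion_iff by blast

lemma approx_stage_first: "approx_stage 1 (Ws 1) (f1 ` N1)"
proof -
  have f1: "lhom L M (Ws 1) f1" and U: "add_extendable L W (Ws 1) (f1 ` carrier M)"
    using complex unfolding app_complex_def by (simp_all add: left_approx_inclusion_iff)
  obtain r where r: "module_retraction L (Ws 1) (f1 ` carrier M) (f1 ` N1) r"
    using module_retraction_transfer[OF M f1 inj proj1_lhom proj1_image _ N1_carrier] proj1_id by blast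
  have "\<forall>u\<in>f1 ` carrier M. g 1 u = \<zero>\<^bsub>Ws (Suc 1)\<^esub>"
    using complex by (simp add: app_complex_def numeral_2_eq_2)
  moreover have "exact_pos 1 \<longrightarrow> {z \<in> carrier (Ws 1). g 1 z = \<zero>\<^bsub>Ws (Suc 1)\<^esub>} = f1 ` carrier M"
    using exact[of 1] by (simp add: exact_at_def in_image_def)
  ultimately show ?thesis
    unfolding approx_stage_def
    using Ws_in_add[of 1] g_lhom[of 1] U r add_extendable_retract[OF U r] by blast
qed

lemma g_ifst_image:
  assumes D: "left_module L D"
  shows "(\<lambda>x. g (Suc i) (ifst x)) ` carrier (dsum (Ws (Suc i)) D) = g (Suc i) ` carrier (Ws (Suc i))"
proof (intro equalityI subsetI)
  interpret D: abelian_group D by (rule left_module_abelian_group[OF D])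
  fix y assume "y \<in> g (Suc i) ` carrier (Ws (Suc i))"
  then obtain a where "a \<in> carrier (Ws (Suc i))" "y = g (Suc i) a"
    by blast
  then show "y \<in> (\<lambda>x. g (Suc i) (ifst x)) ` carrier (dsum (Ws (Suc i)) D)"
    by (intro image_eqI[of _ _ "ipair a \<zero>\<^bsub>D\<^esub>"]) auto
qed auto

lemma g_ifst_kernel:
  assumes i: "1 \<le> i" and h_image: "h ` carrier D = g i ` carrier (Ws i)" and exact_pos: "exact_pos (Suc i)"
  shows "{x \<in> carrier (dsum (Ws (Suc i)) D). g (Suc i) (ifst x) = \<zero>\<^bsub>Ws (Suc (Suc i))\<^esub>}
    = {x. ifst x \<in> h ` carrier D \<and> isnd x \<in> carrier D}"
proof -
  have "{a \<in> carrier (Ws (Suc i)). g (Suc i) a = \<zero>\<^bsub>Ws (Suc (Suc i))\<^esub>} = h ` carrier D"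
    using exact[OF exact_pos] i h_image by (simp add: exact_at_def in_image_def)
  then have "a \<in> carrier (Ws (Suc i)) \<and> g (Suc i) a = \<zero>\<^bsub>Ws (Suc (Suc i))\<^esub> \<longleftrightarrow> a \<in> h ` carrier D" for a
    by blast
  then show ?thesis
    by auto
qed

lemma approx_stage_Suc:
  assumes i: "1 \<le> i" and D: "in_add L W D"
    and h: "lhom L D (Ws (Suc i)) h" and h_image: "h ` carrier D = g i ` carrier (Ws i)"
    and e: "lhom L D D e"
    and key: "id_minus_maps_kernel D (Ws (Suc i)) h e"
  shows "approx_stage (Suc i) (dsum (Ws (Suc i)) D) ((\<lambda>z. ipair (h z) (e z)) ` carrier D)"
proof -
  let ?A = "Ws (Suc i)" and ?U = "{x. ifst x \<in> h ` carrier D \<and> isnd x \<in> carrier D}"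
  have A: "in_add L W ?A" and Al: "left_module L ?A" and Dl: "left_module L D"
    using Ws_in_add[of "Suc i"] D in_add_left_module by auto
  interpret D: abelian_group D by (rule left_module_abelian_group[OF Dl])
  interpret A: abelian_group ?A by (rule left_module_abelian_group[OF Al])
  obtain r where r: "module_retraction L (dsum ?A D) ?U ((\<lambda>z. ipair (h z) (e z)) ` carrier D) r"
    using graph_retraction[OF Dl Al h e key] by blast
  have "h ` carrier D \<subseteq> carrier ?A"
    using lhom_closed[OF h] by auto
  moreover have "\<zero>\<^bsub>?A\<^esub> \<in> h ` carrier D"
    using lhom_zero[OF h D.abelian_group_axioms A.abelian_group_axioms] by force
  ultimately have U: "add_extendable L W (dsum ?A D) ?U"
    by (rule add_extendable_dsum[OF g_image_extendable[OF i, folded h_image] _ _ Al Dl])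
  have "lhom L (dsum ?A D) (Ws (Suc (Suc i))) (\<lambda>x. g (Suc i) (ifst x))"
    by (rule lhom_comp[OF lhom_ifst g_lhom]) simp
  moreover have "\<forall>u\<in>?U. g (Suc i) (ifst u) = \<zero>\<^bsub>Ws (Suc (Suc i))\<^esub>"
    using g_g_zero[OF i] h_image by auto
  moreover note g_ifst_image[OF Dl] g_ifst_kernel[OF i h_image]
  ultimately show ?thesis
    unfolding approx_stage_def using in_add_dsum[OF A D] add_extendable_retract[OF U r] U r
    by blast
qed

lemma approx_stage_step:
  assumes i: "1 \<le> i" and stage: "approx_stage i D S"
  shows "\<exists>d D'. stage_step i D S d D'"
proof -
  let ?A = "Ws (Suc i)"
  obtain h U r where h: "lhom L D ?A h" and h_image: "h ` carrier D = g i ` carrier (Ws i)"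
    and hU: "\<forall>u\<in>U. h u = \<zero>\<^bsub>?A\<^esub>" and U: "add_extendable L W D U"
    and r: "module_retraction L D U S r" and ker: "exact_pos i \<longrightarrow> {z \<in> carrier D. h z = \<zero>\<^bsub>?A\<^esub>} = U"
    using stage unfolding approx_stage_def by blast
  have D: "in_add L W D"
    using stage by (simp add: approx_stage_def)
  have SU: "S \<subseteq> U"
    using r by (simp add: module_retraction_def)
  obtain e where e: "lhom L D D e" and eS: "\<forall>s\<in>S. e s = \<zero>\<^bsub>D\<^esub>"
    and key: "id_minus_maps_kernel D ?A h e"
    and e_ker: "exact_pos i \<longrightarrow> {z \<in> carrier D. h z = \<zero>\<^bsub>?A\<^esub> \<and> e z = \<zero>\<^bsub>D\<^esub>} = S"
    by (rule correction_endomorphism[OF D h U ker[rule_format] r])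
  define d where "d z = ipair (h z) (e z)" for z
  have "lhom L D (dsum ?A D) d"
    unfolding d_def by (rule lhom_ipair[OF h e])
  moreover have "\<forall>s\<in>S. d s = \<zero>\<^bsub>dsum ?A D\<^esub>"
    using hU eS SU by (auto simp: d_def)
  moreover have "exact_pos i \<longrightarrow> {z \<in> carrier D. d z = \<zero>\<^bsub>dsum ?A D\<^esub>} = S"
    using e_ker by (simp add: d_def)
  moreover have "approx_stage (Suc i) (dsum ?A D) (d ` carrier D)"
    unfolding d_def by (rule approx_stage_Suc[OF i D h h_image e key])
  ultimately show ?thesis
    unfolding stage_step_def by blast
qed

text \<open>\<open>stage k\<close> is the term at position \<open>k + 1\<close> of the new complex together with the
  image of the incoming map.\<close>

definition next_stage :: "nat \<Rightarrow> ('a, 'w) umod \<times> (nat \<Rightarrow> 'w) set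
    \<Rightarrow> ((nat \<Rightarrow> 'w) \<Rightarrow> nat \<Rightarrow> 'w) \<times> ('a, 'w) umod" where
  "next_stage i = (\<lambda>(D, S). SOME p. stage_step i D S (fst p) (snd p))"

primrec stage :: "nat \<Rightarrow> ('a, 'w) umod \<times> (nat \<Rightarrow> 'w) set" where
  "stage 0 = (Ws 1, f1 ` N1)"
| "stage (Suc k) =
     (snd (next_stage (Suc k) (stage k)), fst (next_stage (Suc k) (stage k)) ` carrier (fst (stage k)))"

lemma next_stage_step:
  assumes "1 \<le> i" and "approx_stage i D S"
  shows "stage_step i D S (fst (next_stage i (D, S))) (snd (next_stage i (D, S)))"
proof -
  obtain d D' where "stage_step i D S d D'"
    using approx_stage_step[OF assms] by blast
  then have "stage_step i D S (fst (SOME p. stage_step i D S (fst p) (snd p)))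
      (snd (SOME p. stage_step i D S (fst p) (snd p)))"
    by (intro someI[of "\<lambda>p. stage_step i D S (fst p) (snd p)" "(d, D')", simplified]) simp
  then show ?thesis
    by (simp add: next_stage_def)
qed

lemma stage_approx: "approx_stage (Suc k) (fst (stage k)) (snd (stage k))"
proof (induction k)
  case 0
  show ?case using approx_stage_first by simp
next
  case (Suc k)
  then show ?case
    using next_stage_step[of "Suc k" "fst (stage k)" "snd (stage k)"] by (simp add: stage_step_def)
qed

lemma stage_Suc_step:
  "stage_step (Suc k) (fst (stage k)) (snd (stage k)) (fst (next_stage (Suc k) (stage k))) (fst (stage (Suc k)))"
  using next_stage_step[of "Suc k" "fst (stage k)" "snd (stage k)"] stage_approx[of k] by simp

definition new_term :: "nat \<Rightarrow> ('a, 'w) umod" where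
  "new_term i = fst (stage (i - 1))"

definition new_map :: "nat \<Rightarrow> (nat \<Rightarrow> 'w) \<Rightarrow> nat \<Rightarrow> 'w" where
  "new_map i = fst (next_stage i (stage (i - 1)))"

lemma new_map_image: "new_map (Suc k) ` carrier (new_term (Suc k)) = snd (stage (Suc k))"
  by (simp add: new_map_def new_term_def)

lemma new_in_image: "in_image (M\<lparr>carrier := N1\<rparr>) f1 new_term new_map (Suc k) = snd (stage k)"
  by (cases k) (simp_all add: in_image_def new_map_image)

lemma new_app_complex: "app_complex L W (M\<lparr>carrier := N1\<rparr>) f1 new_term new_map"
  unfolding app_complex_def
proof (intro conjI allI impI ballI)
  have "lhom L M (Ws 1) f1" and "N1 \<subseteq> carrier M"
    using complex N1 by (simp_all add: app_complex_def left_submodule_def)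
  then show "lhom L (M\<lparr>carrier := N1\<rparr>) (new_term 1) f1"
    by (simp add: new_term_def lhom_restrict)
  show "left_approx L W (new_term 1\<lparr>carrier := f1 ` carrier (M\<lparr>carrier := N1\<rparr>)\<rparr>) (new_term 1) id"
    using approx_stage_left_approx[OF stage_approx[of 0]] by (simp add: new_term_def)
  fix z assume "z \<in> carrier (M\<lparr>carrier := N1\<rparr>)"
  then show "new_map 1 (f1 z) = \<zero>\<^bsub>new_term 2\<^esub>"
    using stage_Suc_step[of 0] by (simp add: stage_step_def new_map_def new_term_def numeral_2_eq_2)
next
  fix i :: nat assume "1 \<le> i"
  then obtain k where k: "i = Suc k"
    by (cases i) auto
  show "in_add L W (new_term i)"
    using stage_approx[of k] by (simp add: approx_stage_def new_term_def k)
  show "lhom L (new_term i) (new_term (Suc i)) (new_map i)"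
    using stage_Suc_step[of k] by (simp add: stage_step_def new_map_def new_term_def k)
  show "left_approx L W (new_term (Suc i)\<lparr>carrier := new_map i ` carrier (new_term i)\<rparr>) (new_term (Suc i)) id"
    using approx_stage_left_approx[OF stage_approx[of i]] by (simp add: k new_term_def new_map_def)
  fix x assume "x \<in> carrier (new_term i)"
  then have "new_map i x \<in> snd (stage i)"
    using new_map_image[of k] k by blast
  then show "new_map (Suc i) (new_map i x) = \<zero>\<^bsub>new_term (Suc (Suc i))\<^esub>"
    using stage_Suc_step[of i] by (simp add: stage_step_def new_map_def new_term_def)
qed

lemma new_exact_at:
  assumes "exact_pos i" and "1 \<le> i"
  shows "exact_at (M\<lparr>carrier := N1\<rparr>) f1 new_term new_map i"
proof -
  obtain k where k: "i = Suc k"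
    using assms(2) by (cases i) auto
  then show ?thesis
    using stage_Suc_step[of k] assms(1) new_in_image[of k]
    by (simp add: exact_at_def stage_step_def new_map_def new_term_def)
qed

end

section \<open>Comparing \<open>l.app\<close>\<close>

lemma lapp_le_if_exactness_transfers:
  fixes M :: "('a, 'm) module" and M' :: "('a, 'n) module" and W :: "('a, 'w) module"
  assumes transfer: "\<And>f1 Ws g (P :: nat \<Rightarrow> bool). app_complex L W M f1 Ws g \<Longrightarrow> inj_on f1 (carrier M) \<Longrightarrow>
      (\<And>i. P i \<Longrightarrow> 1 \<le> i \<Longrightarrow> exact_at M f1 Ws g i) \<Longrightarrow>
      \<exists>f1' Ws' g'. app_complex L W M' f1' Ws' g' \<and> inj_on f1' (carrier M') \<and>
        (\<forall>i. P i \<longrightarrow> 1 \<le> i \<longrightarrow> exact_at M' f1' Ws' g' i)"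
  shows "lapp L W M \<le> lapp L W M'"
proof -
  have everywhere: "\<exists>f1' Ws' g'. app_complex L W M' f1' Ws' g' \<and> exact_everywhere M' f1' Ws' g'"
    if "app_complex L W M f1 Ws g" "exact_everywhere M f1 Ws g" for f1 Ws g
    using that transfer[of f1 Ws g "\<lambda>_. True"] by (simp add: exact_everywhere_def)
  have upto: "\<exists>f1' Ws' g'. app_complex L W M' f1' Ws' g' \<and> exact_upto M' f1' Ws' g' m"
    if "app_complex L W M f1 Ws g" "exact_upto M f1 Ws g m" for f1 Ws g m
    using that transfer[of f1 Ws g "\<lambda>i. i < m"] unfolding exact_upto_def by fastforce
  show ?thesis
  proof (cases "\<exists>f1' Ws' g'. app_complex L W M' f1' Ws' g' \<and> exact_everywhere M' f1' Ws' g'")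
    case True
    then show ?thesis
      by (simp add: lapp_def)
  next
    case False
    then have "\<not> (\<exists>f1 Ws g. app_complex L W M f1 Ws g \<and> exact_everywhere M f1 Ws g)"
      using everywhere by blast
    then have "lapp L W M = Sup (enat ` {m. 1 \<le> m \<and> (\<exists>f1 Ws g. app_complex L W M f1 Ws g \<and> exact_upto M f1 Ws g m)})"
      unfolding lapp_def by (rule if_not_P)
    also have "\<dots> \<le> Sup (enat ` {m. 1 \<le> m \<and> (\<exists>f1 Ws g. app_complex L W M' f1 Ws g \<and> exact_upto M' f1 Ws g m)})"
      using upto by (intro Sup_subset_mono image_mono) blast
    also have "\<dots> = lapp L W M'"
      unfolding lapp_def using False by (rule if_not_P[symmetric])
    finally show ?thesis .
  qed
qed

theorem lemma2p1:
  fixes R :: "'r ring" and L :: "'a ring" and phi :: "'r \<Rightarrow> 'a"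
    and W :: "('a, 'w) module" and M :: "('a, 'm) module" and N1 N2 :: "'m set"
  assumes "artin_algebra R L phi"
    and "left_module L W" and "fin_gen L W"
    and "left_module L M" and "fin_gen L M"
    and "left_submodule L M N1" and "left_submodule L M N2"
    and "N1 \<inter> N2 = {\<zero>\<^bsub>M\<^esub>}"
    and "carrier M = {x \<oplus>\<^bsub>M\<^esub> y | x y. x \<in> N1 \<and> y \<in> N2}"
  shows "lapp L W (M\<lparr>carrier := N1\<rparr>) \<ge> lapp L W M"
proof (rule lapp_le_if_exactness_transfers)
  fix f1 Ws g and P :: "nat \<Rightarrow> bool"
  assume complex: "app_complex L W M f1 Ws g" and inj: "inj_on f1 (carrier M)"
    and "\<And>i. P i \<Longrightarrow> 1 \<le> i \<Longrightarrow> exact_at M f1 Ws g i"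
  then interpret summand_complex L M N1 N2 W f1 Ws g P
    using assms by unfold_locales
  have "inj_on f1 (carrier (M\<lparr>carrier := N1\<rparr>))"
    using inj N1 by (simp add: left_submodule_def inj_on_subset)
  then show "\<exists>f1' Ws' g'. app_complex L W (M\<lparr>carrier := N1\<rparr>) f1' Ws' g' \<and>
      inj_on f1' (carrier (M\<lparr>carrier := N1\<rparr>)) \<and>
      (\<forall>i. P i \<longrightarrow> 1 \<le> i \<longrightarrow> exact_at (M\<lparr>carrier := N1\<rparr>) f1' Ws' g' i)"
    using new_app_complex new_exact_at by blast
qed

end
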